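(* (1) Let $K\ge2$ and $N>K$, and let $F\in\mathcal F_K$ have (at least) two identical columns. Then there are $Q^1,Q^2\in\mathcal Q_K^{\mathrm{ua}}$ with $FQ^1=FQ^2$ but $(F,Q^1)\not\sim(F,Q^2)$. (2) Let $K\ge2$ and $N\ge1$, and let $Q\in\mathcal Q_K\setminus\mathcal Q_K^{\mathrm{ua}}$ be such that every column of $Q$ is of the form $e_j$ for some $j$, but for some $k$, $e_k$ is not a column of $Q$. Then for every $F\in\mathcal F_K^{\mathrm d}$ there is $F^2\in\mathcal F_K^{\mathrm d}$ with $FQ=F^2Q$ but $(F,Q)\not\sim(F^2,Q)$.
   Context: Fix positive integers $M$ and $N$. For a positive integer $K$, $\mathcal F_K$ is the set of real $M\times K$ matrices with all entries in $[0,1]$, and $\mathcal Q_K$ is the set of real $K\times N$ matrices with entries in $[0,1]$ each of whose columns sums to $1$. $e_k$ is the $k$-th standard basis vector of $\mathbb R^K$. $\mathcal F_K^{\mathrm d}$ is the set of $F\in\mathcal F_K$ whose columns are mutually different. $\mathcal Q_K^{\mathrm{ua}}$ is the set of $Q\in\mathcal Q_K$ such that every column equals some $e_j$ and every $e_j$, $j\in\{1,\dots,K\}$, occurs as a column. $(F^1,Q^1)\sim(F^2,Q^2)$ means $F^1,F^2$ have the same number $K$ of columns and there is a permutation $\pi$ of $\{1,\dots,K\}$ with $F^2_{sk}=F^1_{s\pi(k)}$ and $Q^2_{ki}=Q^1_{\pi(k)i}$ for all $s,k,i$. *)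

theory Defs
  imports Main "HOL.Real"
begin

text \<open>Matrices are functions nat => nat => real, indexed from 0; only entries with
indices in range (rows < M, columns < K, etc.) are meaningful.\<close>

definition inF :: "nat \<Rightarrow> nat \<Rightarrow> (nat \<Rightarrow> nat \<Rightarrow> real) \<Rightarrow> bool" where
  "inF M K F \<longleftrightarrow> (\<forall>s<M. \<forall>k<K. 0 \<le> F s k \<and> F s k \<le> 1)"

definition inQ :: "nat \<Rightarrow> nat \<Rightarrow> (nat \<Rightarrow> nat \<Rightarrow> real) \<Rightarrow> bool" where
  "inQ K N Q \<longleftrightarrow> (\<forall>k<K. \<forall>i<N. 0 \<le> Q k i \<and> Q k i \<le> 1) \<and> (\<forall>i<N. (\<Sum>k<K. Q k i) = 1)"

definition col_is_e :: "nat \<Rightarrow> (nat \<Rightarrow> nat \<Rightarrow> real) \<Rightarrow> nat \<Rightarrow> nat \<Rightarrow> bool" where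
  "col_is_e K Q i j \<longleftrightarrow> (\<forall>k<K. Q k i = (if k = j then 1 else 0))"

definition inQua :: "nat \<Rightarrow> nat \<Rightarrow> (nat \<Rightarrow> nat \<Rightarrow> real) \<Rightarrow> bool" where
  "inQua K N Q \<longleftrightarrow> inQ K N Q \<and> (\<forall>i<N. \<exists>j<K. col_is_e K Q i j)
                    \<and> (\<forall>j<K. \<exists>i<N. col_is_e K Q i j)"

definition inFd :: "nat \<Rightarrow> nat \<Rightarrow> (nat \<Rightarrow> nat \<Rightarrow> real) \<Rightarrow> bool" where
  "inFd M K F \<longleftrightarrow> inF M K F \<and> (\<forall>k<K. \<forall>l<K. k \<noteq> l \<longrightarrow> (\<exists>s<M. F s k \<noteq> F s l))"

definition matmul :: "nat \<Rightarrow> (nat \<Rightarrow> nat \<Rightarrow> real) \<Rightarrow> (nat \<Rightarrow> nat \<Rightarrow> real) \<Rightarrow> nat \<Rightarrow> nat \<Rightarrow> real" where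
  "matmul K F Q s i = (\<Sum>k<K. F s k * Q k i)"

definition prod_eq :: "nat \<Rightarrow> nat \<Rightarrow> nat \<Rightarrow> (nat \<Rightarrow> nat \<Rightarrow> real) \<Rightarrow> (nat \<Rightarrow> nat \<Rightarrow> real)
    \<Rightarrow> (nat \<Rightarrow> nat \<Rightarrow> real) \<Rightarrow> (nat \<Rightarrow> nat \<Rightarrow> real) \<Rightarrow> bool" where
  "prod_eq M N K F1 Q1 F2 Q2 \<longleftrightarrow> (\<forall>s<M. \<forall>i<N. matmul K F1 Q1 s i = matmul K F2 Q2 s i)"

definition equivFQ :: "nat \<Rightarrow> nat \<Rightarrow> nat \<Rightarrow> (nat \<Rightarrow> nat \<Rightarrow> real) \<Rightarrow> (nat \<Rightarrow> nat \<Rightarrow> real)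
    \<Rightarrow> (nat \<Rightarrow> nat \<Rightarrow> real) \<Rightarrow> (nat \<Rightarrow> nat \<Rightarrow> real) \<Rightarrow> bool" where
  "equivFQ M N K F1 Q1 F2 Q2 \<longleftrightarrow> (\<exists>\<pi>. bij_betw \<pi> {..<K} {..<K}
      \<and> (\<forall>s<M. \<forall>k<K. F2 s k = F1 s (\<pi> k))
      \<and> (\<forall>k<K. \<forall>i<N. Q2 k i = Q1 (\<pi> k) i))"

end

theory Submission
  imports Defs
begin

text \<open>Both parts rest on a single observation: a column of F that is never selected by Q
contributes nothing to F Q. In (1), extend the identity assignment of the first K columns of
Q by sending the remaining columns once to k and once to l, where columns k and l of F
coincide; the products agree, yet a row permutation relating the two would have to fix l
and map it to k. In (2), row k of Q vanishes, so column k of F can be changed freely; giving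
it a value in row 0 that occurs nowhere in row 0 of F keeps the columns distinct and rules
out any column permutation.\<close>

definition assignment_matrix :: "(nat \<Rightarrow> nat) \<Rightarrow> nat \<Rightarrow> nat \<Rightarrow> real" where
  "assignment_matrix g k i = (if k = g i then 1 else 0)"

lemma col_is_e_assignment_matrix: "col_is_e K (assignment_matrix g) i (g i)"
  by (simp add: col_is_e_def assignment_matrix_def)

lemma inQua_assignment_matrix:
  assumes "\<forall>i<N. g i < K" and "\<forall>j<K. \<exists>i<N. g i = j"
  shows "inQua K N (assignment_matrix g)"
  using assms col_is_e_assignment_matrix
  unfolding inQua_def inQ_def by (auto simp: assignment_matrix_def sum.delta) metis

lemma matmul_assignment_matrix:
  "g i < K \<Longrightarrow> matmul K F (assignment_matrix g) s i = F s (g i)"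
  by (simp add: matmul_def assignment_matrix_def if_distrib sum.delta cong: if_cong)

lemma assignment_matrix_row_permutation:
  assumes "\<forall>k<K. \<forall>i<N. assignment_matrix g2 k i = assignment_matrix g1 (\<pi> k) i"
    and "i < N" and "g2 i < K"
  shows "g1 i = \<pi> (g2 i)"
  using assms(1)[rule_format, OF assms(3,2)] by (simp add: assignment_matrix_def split: if_splits)

lemma nonidentifiable_if_equal_columns:
  assumes "K < N" and "k < K" and "l < K" and "k \<noteq> l" and "\<forall>s<M. F s k = F s l"
  shows "\<exists>Q1 Q2. inQua K N Q1 \<and> inQua K N Q2 \<and> prod_eq M N K F Q1 F Q2
                 \<and> \<not> equivFQ M N K F Q1 F Q2"
proof -
  define g1 where "g1 i = (if i < K then i else k)" for i
  define g2 where "g2 i = (if i < K then i else l)" for i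
  have "inQua K N (assignment_matrix g1)" "inQua K N (assignment_matrix g2)"
    using assms by (auto intro!: inQua_assignment_matrix simp: g1_def g2_def)
  moreover have "prod_eq M N K F (assignment_matrix g1) F (assignment_matrix g2)"
    using assms by (simp add: prod_eq_def matmul_assignment_matrix g1_def g2_def)
  moreover have "\<not> equivFQ M N K F (assignment_matrix g1) F (assignment_matrix g2)"
  proof
    assume "equivFQ M N K F (assignment_matrix g1) F (assignment_matrix g2)"
    then obtain \<pi> where
      rows: "\<forall>j<K. \<forall>i<N. assignment_matrix g2 j i = assignment_matrix g1 (\<pi> j) i"
      unfolding equivFQ_def by blast
    have "l = \<pi> l"
      using assignment_matrix_row_permutation[OF rows, of l] assms by (simp add: g1_def g2_def)
    moreover have "k = \<pi> l"
      using assignment_matrix_row_permutation[OF rows, of K] assms by (simp add: g1_def g2_def)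
    ultimately show False using \<open>k \<noteq> l\<close> by simp
  qed
  ultimately show ?thesis by blast
qed

lemma row_zero_if_never_selected:
  assumes "\<forall>i<N. \<exists>j<K. col_is_e K Q i j" and "k < K" and "\<forall>i<N. \<not> col_is_e K Q i k"
  shows "\<forall>i<N. Q k i = 0"
  using assms unfolding col_is_e_def by metis

lemma prod_eq_if_columns_differ_only_on_zero_rows:
  assumes "\<forall>s<M. \<forall>j<K. F2 s j \<noteq> F s j \<longrightarrow> (\<forall>i<N. Q j i = 0)"
  shows "prod_eq M N K F Q F2 Q"
  unfolding prod_eq_def matmul_def using assms by (auto intro!: sum.cong)

lemma not_equivFQ_if_entry_outside_row:
  assumes "s < M" and "k < K" and "F2 s k \<notin> F1 s ` {..<K}"
  shows "\<not> equivFQ M N K F1 Q1 F2 Q2"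
  using assms unfolding equivFQ_def by (metis bij_betwE image_eqI lessThan_iff)

lemma exists_unit_interval_outside_finite:
  assumes "finite A"
  shows "\<exists>c\<in>{0..1::real}. c \<notin> A"
proof -
  have "infinite ({0..1::real} - A)"
    using assms by (intro Diff_infinite_finite) auto
  then show ?thesis using infinite_imp_nonempty by blast
qed

lemma inFd_update_fresh_entry:
  assumes "inFd M K F" and "0 < M" and "k < K"
    and "c \<in> {0..1}" and "c \<notin> F 0 ` {..<K}"
  shows "inFd M K (F(0 := (F 0)(k := c)))"
  unfolding inFd_def inF_def
proof (intro conjI allI impI)
  fix s j assume "s < M" "j < K"
  then show "0 \<le> (F(0 := (F 0)(k := c))) s j" "(F(0 := (F 0)(k := c))) s j \<le> 1"
    using assms unfolding inFd_def inF_def by auto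
next
  fix j j' assume jj': "j < K" "j' < K" "j \<noteq> j'"
  show "\<exists>s<M. (F(0 := (F 0)(k := c))) s j \<noteq> (F(0 := (F 0)(k := c))) s j'"
  proof (cases "j = k \<or> j' = k")
    case True
    then show ?thesis using assms jj' by (intro exI[of _ 0]) auto
  next
    case False
    then obtain s where "s < M" "F s j \<noteq> F s j'"
      using assms(1) jj' unfolding inFd_def by blast
    with False show ?thesis by (intro exI[of _ s]) auto
  qed
qed

lemma nonidentifiable_if_unit_vector_missing:
  assumes "0 < M" and "\<forall>i<N. \<exists>j<K. col_is_e K Q i j"
    and "k < K" and "\<forall>i<N. \<not> col_is_e K Q i k" and "inFd M K F"
  shows "\<exists>F2. inFd M K F2 \<and> prod_eq M N K F Q F2 Q \<and> \<not> equivFQ M N K F Q F2 Q"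
proof -
  obtain c where c: "c \<in> {0..1}" "c \<notin> F 0 ` {..<K}"
    using exists_unit_interval_outside_finite[of "F 0 ` {..<K}"] by blast
  define F2 where "F2 = F(0 := (F 0)(k := c))"
  have "inFd M K F2"
    unfolding F2_def using inFd_update_fresh_entry assms c by blast
  moreover have "prod_eq M N K F Q F2 Q"
    using row_zero_if_never_selected[OF assms(2-4)]
    by (intro prod_eq_if_columns_differ_only_on_zero_rows) (auto simp: F2_def)
  moreover have "\<not> equivFQ M N K F Q F2 Q"
    using assms c by (intro not_equivFQ_if_entry_outside_row[of 0 _ k]) (auto simp: F2_def)
  ultimately show ?thesis by blast
qed

theorem mainTheorem8:
  fixes M N :: nat
  assumes "0 < M" and "0 < N"
  shows "(\<forall>K F. 2 \<le> K \<longrightarrow> K < N \<longrightarrow> inF M K F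
            \<longrightarrow> (\<exists>k<K. \<exists>l<K. k \<noteq> l \<and> (\<forall>s<M. F s k = F s l))
            \<longrightarrow> (\<exists>Q1 Q2. inQua K N Q1 \<and> inQua K N Q2 \<and> prod_eq M N K F Q1 F Q2
                     \<and> \<not> equivFQ M N K F Q1 F Q2))
       \<and> (\<forall>K Q. 2 \<le> K \<longrightarrow> 1 \<le> N \<longrightarrow> inQ K N Q \<longrightarrow> \<not> inQua K N Q
            \<longrightarrow> (\<forall>i<N. \<exists>j<K. col_is_e K Q i j)
            \<longrightarrow> (\<exists>k<K. \<forall>i<N. \<not> col_is_e K Q i k)
            \<longrightarrow> (\<forall>F. inFd M K F \<longrightarrow>
                  (\<exists>F2. inFd M K F2 \<and> prod_eq M N K F Q F2 Q \<and> \<not> equivFQ M N K F Q F2 Q)))"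
proof (intro conjI allI impI)
  fix K and F :: "nat \<Rightarrow> nat \<Rightarrow> real" assume "K < N" and "\<exists>k<K. \<exists>l<K. k \<noteq> l \<and> (\<forall>s<M. F s k = F s l)"
  then show "\<exists>Q1 Q2. inQua K N Q1 \<and> inQua K N Q2 \<and> prod_eq M N K F Q1 F Q2
                     \<and> \<not> equivFQ M N K F Q1 F Q2"
    using nonidentifiable_if_equal_columns by blast
next
  fix K Q and F :: "nat \<Rightarrow> nat \<Rightarrow> real" assume "\<forall>i<N. \<exists>j<K. col_is_e K Q i j"
    and "\<exists>k<K. \<forall>i<N. \<not> col_is_e K Q i k" and "inFd M K F"
  then show "\<exists>F2. inFd M K F2 \<and> prod_eq M N K F Q F2 Q \<and> \<not> equivFQ M N K F Q F2 Q"
    using nonidentifiable_if_unit_vector_missing[OF \<open>0 < M\<close>] by blast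
qed

end
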